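(* For any $\mathbf A\in\mathbb R^{m\times n}$ and any $\alpha>0$, if $S\sim\mathrm{DPP}(\frac1\alpha\mathbf A^\top\mathbf A)$, then \[ \mathbb E[\mathrm{Er}_{\mathbf A}(S)]=\mathrm{tr}\big(\mathbf A\mathbf A^\top(\mathbf I+\tfrac1\alpha\mathbf A\mathbf A^\top)^{-1}\big)=\mathbb E[|S|]\cdot\alpha. \]
   Context: For $\mathbf A\in\mathbb R^{m\times n}$ with columns $\mathbf a_1,\dots,\mathbf a_n$ and $S\subseteq\{1,\dots,n\}$, $\mathbf P_S$ is the orthogonal projection onto $\mathrm{span}\{\mathbf a_i:i\in S\}$ and $\mathrm{Er}_{\mathbf A}(S)=\|\mathbf A-\mathbf P_S\mathbf A\|_F^2$. For a p.s.d. $n\times n$ matrix $\mathbf K$, $S\sim\mathrm{DPP}(\mathbf K)$ is the distribution over all subsets $S\subseteq\{1,\dots,n\}$ with $\Pr(S)=\det(\mathbf K_{S,S})/\det(\mathbf I+\mathbf K)$, $\mathbf K_{S,S}$ the principal submatrix indexed by $S$ (empty determinant $=1$). *)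

theory Defs
  imports "HOL-Analysis.Analysis"
begin

definition orth_proj :: "(real^'m) set \<Rightarrow> real^'m \<Rightarrow> real^'m" where
  "orth_proj V x = (THE y. y \<in> span V \<and> (\<forall>v\<in>span V. (x - y) \<bullet> v = 0))"

definition proj_cols :: "real^'n^'m \<Rightarrow> 'n set \<Rightarrow> real^'m^'m" where
  "proj_cols A S = matrix (orth_proj ((\<lambda>i. column i A) ` S))"

definition frob_sq :: "real^'n^'m \<Rightarrow> real" where
  "frob_sq M = (\<Sum>i\<in>UNIV. \<Sum>j\<in>UNIV. (M$i$j)^2)"

definition Er :: "real^'n^'m \<Rightarrow> 'n set \<Rightarrow> real" where
  "Er A S = frob_sq (A - proj_cols A S ** A)"

text \<open>Principal minor det(K_{S,S}) (Leibniz formula over S; empty minor = 1).\<close>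
definition principal_minor :: "real^'n^'n \<Rightarrow> 'n set \<Rightarrow> real" where
  "principal_minor K S = (\<Sum>p\<in>{p. p permutes S}. of_int (sign p) * (\<Prod>i\<in>S. K$i$(p i)))"

definition dpp_prob :: "real^'n^'n \<Rightarrow> 'n set \<Rightarrow> real" where
  "dpp_prob K S = principal_minor K S / det (mat 1 + K)"

definition dpp_expect :: "real^'n^'n \<Rightarrow> ('n set \<Rightarrow> real) \<Rightarrow> real" where
  "dpp_expect K f = (\<Sum>S\<in>Pow (UNIV::'n set). dpp_prob K S * f S)"

end

theory Submission
  imports Defs
begin

(* Write L = A^T A / alpha and a_j for the columns of A. Padding L_{S,S} with the identity
   makes principal minors full determinants, whence det (I + L) = sum_S det L_{S,S}.
   Gram-Schmidt gives det L_{S+j,S+j} = ||a_j - P_S a_j||^2 / alpha * det L_{S,S}, and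
   Er(S) = sum_{j notin S} ||a_j - P_S a_j||^2, so sum_S det L_{S,S} Er(S) = alpha sum_T |T| det L_{T,T},
   i.e. E[Er(S)] = alpha E[|S|]. By Cramer's rule sum_{T containing j} det L_{T,T} =
   det (I + L) (1 - (I + L)^-1_jj), so E[|S|] = n - tr (I + L)^-1; the push-through identity
   A^T (I + A A^T / alpha)^-1 = (I + L)^-1 A^T turns the trace of the theorem into the same
   quantity times alpha. *)

lemma matrix_add_rdistrib: "(B + C) ** A = B ** A + C ** A"
  by (simp add: vec_eq_iff matrix_matrix_mult_def sum.distrib distrib_right)

lemma trace_scaleR: "trace (c *\<^sub>R X) = c * trace X"
  by (simp add: trace_def sum_distrib_left)

lemma matrix_inv_right: "invertible X \<Longrightarrow> X ** matrix_inv X = mat 1"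
  and matrix_inv_left: "invertible X \<Longrightarrow> matrix_inv X ** X = mat 1"
  unfolding invertible_def matrix_inv_def
  by (fact someI_ex[THEN conjunct1], fact someI_ex[THEN conjunct2])

lemma det_unit_row_cong:
  fixes M M' :: "'a::comm_ring_1^'n^'n"
  assumes "row i M = axis i 1" "row i M' = axis i 1"
    and "\<And>k l. l \<noteq> i \<Longrightarrow> M$k$l = M'$k$l"
  shows "det M = det M'"
  unfolding det_def
proof (rule sum.cong[OF refl])
  have unit_row: "M$i$l = (if l = i then 1 else 0)" "M'$i$l = (if l = i then 1 else 0)" for l
    using assms(1,2) by (auto simp: row_def axis_def vec_eq_iff)
  fix p assume "p \<in> {p. p permutes (UNIV::'n set)}"
  then have p: "p permutes UNIV" by simp
  show "of_int (sign p) * (\<Prod>k\<in>UNIV. M $ k $ p k) = of_int (sign p) * (\<Prod>k\<in>UNIV. M' $ k $ p k)"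
  proof (cases "p i = i")
    case True
    then have "p k \<noteq> i" if "k \<noteq> i" for k
      using that p by (metis permutes_inj injD)
    then have "M $ k $ p k = M' $ k $ p k" for k
      by (cases "k = i") (simp_all add: assms(3) unit_row True)
    then show ?thesis by simp
  next
    case False
    then have "(\<Prod>k\<in>UNIV. M $ k $ p k) = 0" "(\<Prod>k\<in>UNIV. M' $ k $ p k) = 0"
      by (auto simp: unit_row intro!: prod_zero bexI[of _ i])
    then show ?thesis by simp
  qed
qed

lemma det_row_scale_add_span:
  fixes E :: "'a::field^'n^'n"
  assumes row: "row i E = d *s a + x" and x: "x \<in> vec.span {row j E | j. j \<noteq> i}"
  shows "det E = d * det (\<chi> k. if k = i then a else row k E)"
proof -
  define B where "B = (\<chi> k. if k = i then d *s a else row k E)"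
  have rows: "row j B = row j E" if "j \<noteq> i" for j
    using that by (simp add: B_def row_def vec_eq_iff)
  then have "{row j B | j. j \<noteq> i} = {row j E | j. j \<noteq> i}"
    by (intro Collect_cong) metis
  then have "det (\<chi> k. if k = i then row i B + x else row k B) = det B"
    using x by (intro det_row_span) simp
  moreover have "(\<chi> k. if k = i then row i B + x else row k B) = E"
    using row rows by (simp add: vec_eq_iff B_def row_def)
  moreover have "det B = d * det (\<chi> k. if k = i then a else row k E)"
    unfolding B_def using det_row_mul[of i d "\<lambda>_. a" "\<lambda>k. row k E"] by simp
  ultimately show ?thesis by simp
qed

lemma invertible_mat1_add_gram:
  fixes B :: "real^'a^'b" and c :: real
  assumes c: "c \<ge> 0"
  shows "invertible (mat 1 + c *\<^sub>R (transpose B ** B))"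
proof -
  have "x = 0" if x: "(mat 1 + c *\<^sub>R (transpose B ** B)) *v x = 0" for x
  proof -
    have "x \<bullet> ((transpose B ** B) *v x) = (B *v x) \<bullet> (B *v x)"
      by (metis matrix_vector_mul_assoc transpose_matrix_vector inner_commute dot_lmul_matrix)
    moreover have "x \<bullet> ((mat 1 + c *\<^sub>R (transpose B ** B)) *v x)
        = x \<bullet> x + c * (x \<bullet> ((transpose B ** B) *v x))"
      by (simp add: matrix_vector_mult_add_rdistrib scaleR_matrix_vector_assoc[symmetric] inner_add_right)
    ultimately have "x \<bullet> x + c * ((B *v x) \<bullet> (B *v x)) = 0"
      using x by simp
    moreover have "c * ((B *v x) \<bullet> (B *v x)) \<ge> 0"
      using c by simp
    ultimately have "x \<bullet> x = 0"
      using inner_ge_zero[of x] by linarith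
    then show "x = 0"
      by simp
  qed
  then show ?thesis
    unfolding invertible_left_inverse matrix_left_invertible_ker by blast
qed

lemma sum_card_mult_eq_sum_members:
  fixes f :: "'n::finite set \<Rightarrow> 'a::comm_semiring_1"
  shows "(\<Sum>T\<in>Pow UNIV. of_nat (card T) * f T) = (\<Sum>j\<in>UNIV. \<Sum>T\<in>{T. j \<in> T}. f T)"
proof -
  have "(\<Sum>T\<in>Pow UNIV. of_nat (card T) * f T) = (\<Sum>T\<in>Pow UNIV. \<Sum>j\<in>{j\<in>UNIV. j \<in> T}. f T)"
    by (rule sum.cong) auto
  also have "\<dots> = (\<Sum>j\<in>UNIV. \<Sum>T\<in>{T \<in> Pow UNIV. j \<in> T}. f T)"
    by (rule sum.swap_restrict) auto
  finally show ?thesis by simp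
qed

lemma sum_insert_eq_sum_card_mult:
  fixes f :: "'n::finite set \<Rightarrow> 'a::comm_semiring_1"
  shows "(\<Sum>S\<in>Pow UNIV. \<Sum>j\<in>UNIV - S. f (insert j S)) = (\<Sum>T\<in>Pow UNIV. of_nat (card T) * f T)"
proof -
  have bij: "bij_betw (insert j) {S \<in> Pow UNIV. j \<notin> S} {T. j \<in> T}" for j :: 'n
    by (rule bij_betw_byWitness[where f'="\<lambda>T. T - {j}"]) auto
  have "(\<Sum>S\<in>Pow UNIV. \<Sum>j\<in>UNIV - S. f (insert j S))
      = (\<Sum>S\<in>Pow UNIV. \<Sum>j\<in>{j\<in>UNIV. j \<notin> S}. f (insert j S))"
    by (rule sum.cong) (auto intro: sum.cong)
  also have "\<dots> = (\<Sum>j\<in>UNIV. \<Sum>S\<in>{S \<in> Pow UNIV. j \<notin> S}. f (insert j S))"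
    by (rule sum.swap_restrict) auto
  also have "\<dots> = (\<Sum>j\<in>UNIV. \<Sum>T\<in>{T. j \<in> T}. f T)"
    by (rule sum.cong[OF refl], rule sum.reindex_bij_betw[OF bij])
  finally show ?thesis
    unfolding sum_card_mult_eq_sum_members .
qed

definition principal_pad :: "'a::zero_neq_one^'n^'n \<Rightarrow> 'n set \<Rightarrow> 'a^'n^'n" where
  "principal_pad K S = (\<chi> i j. if i \<in> S \<and> j \<in> S then K$i$j else if i = j then 1 else 0)"

lemma permutes_if_fixes_outside:
  assumes "p permutes (UNIV::'n set)" "\<And>i. i \<notin> S \<Longrightarrow> p i = i"
  shows "p permutes S"
  using assms unfolding permutes_def by blast

lemma principal_minor_eq_det_pad: "principal_minor K S = det (principal_pad K S)"
proof -
  have term_eq: "(\<Prod>i\<in>UNIV. principal_pad K S $ i $ p i)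
      = (if p permutes S then (\<Prod>i\<in>S. K$i$(p i)) else 0)"
    if p: "p permutes UNIV" for p
  proof (cases "p permutes S")
    case True
    have "(\<Prod>i\<in>UNIV. principal_pad K S $ i $ p i) = (\<Prod>i\<in>S. principal_pad K S $ i $ p i)"
      by (rule prod.mono_neutral_right) (auto simp: principal_pad_def permutes_not_in[OF True])
    also have "\<dots> = (\<Prod>i\<in>S. K$i$(p i))"
      by (rule prod.cong) (auto simp: principal_pad_def permutes_in_image[OF True])
    finally show ?thesis using True by simp
  next
    case False
    then obtain i where "i \<notin> S" "p i \<noteq> i"
      using permutes_if_fixes_outside[OF p] by blast
    then have "principal_pad K S $ i $ p i = 0" by (auto simp: principal_pad_def)
    then show ?thesis using False by (meson UNIV_I finite prod_zero)
  qed
  have "det (principal_pad K S) = (\<Sum>p\<in>{p. p permutes UNIV}.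
      of_int (sign p) * (if p permutes S then (\<Prod>i\<in>S. K$i$(p i)) else 0))"
    unfolding det_def by (rule sum.cong) (auto simp: term_eq)
  also have "\<dots> = principal_minor K S"
    unfolding principal_minor_def
    by (rule sum.mono_neutral_cong_right) (auto intro: permutes_subset finite_permutations)
  finally show ?thesis by simp
qed

lemma prod_add_mat1_permutation:
  fixes K :: "'a::comm_ring_1^'n^'n"
  assumes p: "p permutes UNIV"
  shows "(\<Prod>i\<in>UNIV. (mat 1 + K) $ i $ p i)
       = (\<Sum>T\<in>Pow UNIV. if p permutes T then (\<Prod>i\<in>T. K$i$(p i)) else 0)"
proof -
  have "(\<Prod>i\<in>UNIV. (mat 1 + K) $ i $ p i) = (\<Prod>i\<in>UNIV. K$i$(p i) + (if i = p i then 1 else 0))"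
    by (rule prod.cong) (auto simp: mat_def)
  also have "\<dots> = (\<Sum>T\<in>Pow UNIV. (\<Prod>i\<in>T. K$i$(p i)) * (\<Prod>i\<in>UNIV - T. if i = p i then 1 else 0))"
    by (rule prod_add) simp
  also have "\<dots> = (\<Sum>T\<in>Pow UNIV. if p permutes T then (\<Prod>i\<in>T. K$i$(p i)) else 0)"
  proof (rule sum.cong[OF refl])
    fix T
    show "(\<Prod>i\<in>T. K$i$(p i)) * (\<Prod>i\<in>UNIV - T. if i = p i then 1 else 0)
        = (if p permutes T then \<Prod>i\<in>T. K$i$(p i) else 0)"
    proof (cases "p permutes T")
      case True
      then show ?thesis by (auto simp: permutes_not_in intro!: prod.neutral)
    next
      case False
      then obtain i where "i \<notin> T" "p i \<noteq> i"
        using permutes_if_fixes_outside[OF p] by blast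
      then have "(\<Prod>i\<in>UNIV - T. if i = p i then 1 else 0) = (0::'a)"
        by (intro prod_zero) (auto intro!: bexI[of _ i])
      then show ?thesis using False by simp
    qed
  qed
  finally show ?thesis .
qed

lemma det_mat1_add_eq_sum_principal_minors:
  "det (mat 1 + K) = (\<Sum>T\<in>Pow UNIV. principal_minor K T)"
proof -
  have "det (mat 1 + K) = (\<Sum>p\<in>{p. p permutes UNIV}. \<Sum>T\<in>Pow UNIV.
      of_int (sign p) * (if p permutes T then \<Prod>i\<in>T. K$i$(p i) else 0))"
    unfolding det_def
    by (intro sum.cong refl) (simp only: mem_Collect_eq prod_add_mat1_permutation sum_distrib_left)
  also have "\<dots> = (\<Sum>T\<in>Pow UNIV. \<Sum>p\<in>{p. p permutes UNIV}.
      of_int (sign p) * (if p permutes T then \<Prod>i\<in>T. K$i$(p i) else 0))"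
    by (rule sum.swap)
  also have "\<dots> = (\<Sum>T\<in>Pow UNIV. principal_minor K T)"
    unfolding principal_minor_def
    by (rule sum.cong[OF refl], rule sum.mono_neutral_cong_right)
      (auto intro: permutes_subset finite_permutations)
  finally show ?thesis .
qed

lemma principal_minor_zero_column:
  "principal_minor (\<chi> r c. if c = j then 0 else K$r$c) T
     = (if j \<in> T then 0 else principal_minor K T)"
proof (cases "j \<in> T")
  case True
  have "(\<Prod>i\<in>T. if p i = j then 0 else K$i$(p i)) = 0" if p: "p permutes T" for p
  proof -
    have "inv p j \<in> T" "p (inv p j) = j"
      using True p permutes_in_image permutes_inv permutes_inverses(1) by fastforce+
    then show ?thesis by (intro prod_zero) (auto intro!: bexI[of _ "inv p j"])
  qed
  then show ?thesis using True unfolding principal_minor_def by (simp add: sum.neutral)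
next
  case False
  have "(\<Prod>i\<in>T. if p i = j then 0 else K$i$(p i)) = (\<Prod>i\<in>T. K$i$(p i))" if p: "p permutes T" for p
    using False permutes_in_image[OF p] by (intro prod.cong) auto
  then show ?thesis using False unfolding principal_minor_def by (auto intro: sum.cong)
qed

lemma sum_principal_minors_containing:
  fixes L :: "real^'n^'n"
  assumes inv: "invertible (mat 1 + L)"
  shows "(\<Sum>T\<in>{T. j \<in> T}. principal_minor L T)
       = det (mat 1 + L) * (1 - matrix_inv (mat 1 + L) $ j $ j)"
proof -
  let ?N = "mat 1 + L" and ?L\<^sub>j = "\<chi> r c. if c = j then 0 else L$r$c"
  \<comment> \<open>Cramer's rule for \<open>?N *v x = axis j 1\<close>: replacing column j of \<open>?N\<close> by the unit vector
    produces \<open>mat 1 + ?L\<^sub>j\<close>, whose principal minors are those of L avoiding j.\<close>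
  define x where "x = matrix_inv ?N *v axis j 1"
  have "?N *v x = axis j 1"
    unfolding x_def by (simp add: matrix_vector_mul_assoc matrix_inv_right[OF inv])
  then have "mat 1 + ?L\<^sub>j = (\<chi> r c. if c = j then (?N *v x)$r else ?N$r$c)"
    by (simp add: vec_eq_iff mat_def axis_def)
  moreover have "x$j = matrix_inv ?N $ j $ j"
    unfolding x_def by (simp add: matrix_vector_mult_def axis_def if_distrib cong: if_cong)
  ultimately have cramer: "det (mat 1 + ?L\<^sub>j) = matrix_inv ?N $ j $ j * det ?N"
    using cramer_lemma[where A = ?N and k = j and x = x] by simp
  have "det ?N = (\<Sum>T\<in>Pow UNIV. if j \<in> T then principal_minor L T else 0)
      + (\<Sum>T\<in>Pow UNIV. if j \<in> T then 0 else principal_minor L T)"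
    by (simp add: det_mat1_add_eq_sum_principal_minors sum.distrib[symmetric] if_distrib cong: if_cong)
  also have "(\<Sum>T\<in>Pow UNIV. if j \<in> T then 0 else principal_minor L T) = det (mat 1 + ?L\<^sub>j)"
    by (simp add: det_mat1_add_eq_sum_principal_minors principal_minor_zero_column)
  also have "(\<Sum>T\<in>Pow UNIV. if j \<in> T then principal_minor L T else 0)
      = (\<Sum>T\<in>{T. j \<in> T}. principal_minor L T)"
    by (simp add: sum.inter_filter[symmetric])
  finally show ?thesis using cramer by (simp add: algebra_simps)
qed

lemma sum_card_mult_principal_minor:
  fixes L :: "real^'n^'n"
  assumes "invertible (mat 1 + L)"
  shows "(\<Sum>T\<in>Pow UNIV. real (card T) * principal_minor L T)
       = det (mat 1 + L) * (real CARD('n) - trace (matrix_inv (mat 1 + L)))"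
  unfolding sum_card_mult_eq_sum_members sum_principal_minors_containing[OF assms]
  by (simp add: trace_def sum_subtractf right_diff_distrib sum_distrib_left)

lemma orth_proj_exists_unique:
  fixes V :: "'a::euclidean_space set"
  shows "\<exists>!y. y \<in> span V \<and> (\<forall>v\<in>span V. (x - y) \<bullet> v = 0)"
proof -
  obtain y z where yz: "y \<in> span V" "\<And>w. w \<in> span V \<Longrightarrow> orthogonal z w" "x = y + z"
    using orthogonal_subspace_decomp_exists by blast
  have y: "y \<in> span V \<and> (\<forall>v\<in>span V. (x - y) \<bullet> v = 0)"
    using yz by (simp add: orthogonal_def)
  moreover have "y' = y" if y': "y' \<in> span V \<and> (\<forall>v\<in>span V. (x - y') \<bullet> v = 0)" for y'
  proof -
    have "y - y' \<in> span V" using y y' by (simp add: span_diff)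
    then have "(x - y') \<bullet> (y - y') = 0" "(x - y) \<bullet> (y - y') = 0"
      using y y' by blast+
    then have "(y - y') \<bullet> (y - y') = 0" by (simp add: inner_diff_left)
    then show ?thesis by simp
  qed
  ultimately show ?thesis by blast
qed

lemma orth_proj_in_span: "orth_proj V x \<in> span V"
  and orth_proj_orthogonal: "v \<in> span V \<Longrightarrow> (x - orth_proj V x) \<bullet> v = 0"
  using theI'[OF orth_proj_exists_unique[of V x]] unfolding orth_proj_def by auto

lemma orth_proj_unique:
  assumes "y \<in> span V" "\<And>v. v \<in> span V \<Longrightarrow> (x - y) \<bullet> v = 0"
  shows "orth_proj V x = y"
  unfolding orth_proj_def using assms orth_proj_exists_unique[of V x] by (intro the1_equality) auto

lemma orth_proj_id: "x \<in> span V \<Longrightarrow> orth_proj V x = x"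
  by (rule orth_proj_unique) auto

lemma linear_orth_proj: "linear (orth_proj V)"
proof (rule linearI)
  fix x y
  show "orth_proj V (x + y) = orth_proj V x + orth_proj V y"
  proof (rule orth_proj_unique)
    fix v assume "v \<in> span V"
    then have "(x - orth_proj V x) \<bullet> v = 0" "(y - orth_proj V y) \<bullet> v = 0"
      by (simp_all add: orth_proj_orthogonal)
    then show "(x + y - (orth_proj V x + orth_proj V y)) \<bullet> v = 0"
      by (simp add: inner_diff_left inner_add_left)
  qed (simp add: span_add orth_proj_in_span)
next
  fix c x
  show "orth_proj V (c *\<^sub>R x) = c *\<^sub>R orth_proj V x"
  proof (rule orth_proj_unique)
    fix v assume "v \<in> span V"
    then have "(x - orth_proj V x) \<bullet> v = 0"
      by (rule orth_proj_orthogonal)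
    then show "(c *\<^sub>R x - c *\<^sub>R orth_proj V x) \<bullet> v = 0"
      by (simp add: inner_diff_left)
  qed (simp add: span_mul orth_proj_in_span)
qed

(* Subtracting from row i the combination of the rows in S that represents P_S v_i
   leaves c ||v_i - P_S v_i||^2 times the i-th unit row. *)
lemma principal_minor_gram_insert:
  fixes v :: "'n::finite \<Rightarrow> real^'m" and K :: "real^'n^'n"
  assumes K: "\<And>j k. K$j$k = c * (v j \<bullet> v k)" and i: "i \<notin> S"
  shows "principal_minor K (insert i S)
       = c * (norm (v i - orth_proj (v ` S) (v i)))\<^sup>2 * principal_minor K S"
proof -
  define E where "E = principal_pad K (insert i S)"
  define f where "f w = (\<chi> l. if l \<in> insert i S then c * (w \<bullet> v l) else 0)" for w
  define y where "y = orth_proj (v ` S) (v i)"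
  define r where "r = v i - y"
  have lin: "linear f"
    by (rule linearI) (auto simp: f_def vec_eq_iff inner_add_left algebra_simps)
  have row_E: "row j E = f (v j)" if "j \<in> insert i S" for j
    using that by (auto simp: vec_eq_iff row_def E_def principal_pad_def f_def K)
  have "y \<in> span (v ` S)"
    unfolding y_def by (rule orth_proj_in_span)
  then have "f y \<in> span (f ` v ` S)"
    using span_linear_image[OF lin] by blast
  moreover have "f ` v ` S \<subseteq> {row j E | j. j \<noteq> i}"
    using row_E i by force
  ultimately have fy: "f y \<in> vec.span {row j E | j. j \<noteq> i}"
    unfolding span_vec_eq by (meson span_mono subsetD)
  have r_orth: "r \<bullet> v l = 0" if "l \<in> S" for l
    unfolding r_def y_def using that by (intro orth_proj_orthogonal span_base) simp
  have "r \<bullet> y = 0"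
    unfolding r_def y_def by (intro orth_proj_orthogonal orth_proj_in_span)
  then have "r \<bullet> v i = r \<bullet> r"
    unfolding r_def by (simp add: inner_diff_right)
  then have "f r = (c * (r \<bullet> r)) *s axis i 1"
    using r_orth by (auto simp: f_def vec_eq_iff axis_def)
  then have "row i E = (c * (r \<bullet> r)) *s axis i 1 + f y"
    using row_E[of i] linear_add[OF lin, of r y] by (simp add: r_def)
  then have "det E = c * (r \<bullet> r) * det (\<chi> k. if k = i then axis i 1 else row k E)"
    using fy by (rule det_row_scale_add_span)
  also have "det (\<chi> k. if k = i then axis i 1 else row k E) = det (principal_pad K S)"
    using i by (intro det_unit_row_cong[of i])
      (auto simp: row_def E_def principal_pad_def axis_def vec_eq_iff)
  finally show ?thesis
    unfolding principal_minor_eq_det_pad E_def r_def y_def by (simp add: power2_norm_eq_inner)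
qed

definition residual :: "real^'n^'m \<Rightarrow> 'n set \<Rightarrow> 'n \<Rightarrow> real^'m" where
  "residual A S j = column j A - orth_proj ((\<lambda>i. column i A) ` S) (column j A)"

lemma Er_eq_sum_residuals: "Er A S = (\<Sum>j\<in>UNIV - S. (norm (residual A S j))\<^sup>2)"
proof -
  let ?P = "orth_proj ((\<lambda>i. column i A) ` S)"
  have P: "proj_cols A S *v x = ?P x" for x
    unfolding proj_cols_def using linear_orth_proj linear_matrix_vector_mul_eq
    by (blast intro: matrix_works)
  have PA: "(proj_cols A S ** A)$k$j = ?P (column j A) $ k" for k j
  proof -
    have "(proj_cols A S ** A)$k$j = (proj_cols A S *v column j A) $ k"
      by (simp add: matrix_matrix_mult_def matrix_vector_mult_def column_def)
    then show ?thesis by (simp add: P)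
  qed
  have "Er A S = (\<Sum>k\<in>UNIV. \<Sum>j\<in>UNIV. (A$k$j - ?P (column j A) $ k)\<^sup>2)"
    unfolding Er_def frob_sq_def by (simp add: PA)
  also have "\<dots> = (\<Sum>j\<in>UNIV. \<Sum>k\<in>UNIV. (A$k$j - ?P (column j A) $ k)\<^sup>2)"
    by (rule sum.swap)
  also have "\<dots> = (\<Sum>j\<in>UNIV. (norm (residual A S j))\<^sup>2)"
    unfolding residual_def power2_norm_eq_inner inner_vec_def
    by (simp add: power2_eq_square column_def)
  also have "\<dots> = (\<Sum>j\<in>UNIV - S. (norm (residual A S j))\<^sup>2)"
    by (rule sum.mono_neutral_right) (auto simp: residual_def orth_proj_id span_base)
  finally show ?thesis .
qed

lemma sum_principal_minor_gram_mult_Er: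
  fixes A :: "real^'n^'m" and c :: real
  defines "K \<equiv> c *\<^sub>R (transpose A ** A)"
  shows "c * (\<Sum>S\<in>Pow UNIV. principal_minor K S * Er A S)
       = (\<Sum>T\<in>Pow UNIV. real (card T) * principal_minor K T)"
proof -
  have "K$j$k = c * (column j A \<bullet> column k A)" for j k
    unfolding K_def by (simp add: matrix_matrix_mult_def transpose_def column_def inner_vec_def)
  then have "c * principal_minor K S * (norm (residual A S j))\<^sup>2 = principal_minor K (insert j S)"
    if "j \<notin> S" for S j
    using principal_minor_gram_insert[of K c "\<lambda>i. column i A", OF _ that]
    by (simp add: residual_def)
  then have "c * (principal_minor K S * Er A S) = (\<Sum>j\<in>UNIV - S. principal_minor K (insert j S))" for S
    unfolding Er_eq_sum_residuals sum_distrib_left by (intro sum.cong) (auto simp: mult.assoc)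
  then have "c * (\<Sum>S\<in>Pow UNIV. principal_minor K S * Er A S)
      = (\<Sum>S\<in>Pow UNIV. \<Sum>j\<in>UNIV - S. principal_minor K (insert j S))"
    unfolding sum_distrib_left[of c] by (simp only:)
  also have "\<dots> = (\<Sum>T\<in>Pow UNIV. real (card T) * principal_minor K T)"
    by (rule sum_insert_eq_sum_card_mult)
  finally show ?thesis .
qed

lemma trace_gram_push_through:
  fixes A :: "real^'n^'m" and c :: real
  assumes c: "c \<ge> 0"
  shows "c * trace (A ** transpose A ** matrix_inv (mat 1 + c *\<^sub>R (A ** transpose A)))
       = real CARD('n) - trace (matrix_inv (mat 1 + c *\<^sub>R (transpose A ** A)))"
proof -
  define M where "M = mat 1 + c *\<^sub>R (A ** transpose A)"
  define N where "N = mat 1 + c *\<^sub>R (transpose A ** A)"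
  have inv_M: "invertible M"
    unfolding M_def using invertible_mat1_add_gram[OF c, of "transpose A"] by simp
  have inv_N: "invertible N"
    unfolding N_def using invertible_mat1_add_gram[OF c, of A] .
  have "transpose A ** M = N ** transpose A"
    unfolding M_def N_def
    by (simp add: matrix_add_ldistrib matrix_add_rdistrib matrix_scalar_ac
        scalar_matrix_assoc[symmetric] matrix_mul_assoc)
  then have push: "matrix_inv N ** transpose A = transpose A ** matrix_inv M"
    by (metis matrix_inv_left[OF inv_N] matrix_inv_right[OF inv_M] matrix_mul_assoc
        matrix_mul_lid matrix_mul_rid)
  have "c * trace (A ** transpose A ** matrix_inv M) = c * trace (A ** (matrix_inv N ** transpose A))"
    by (simp add: push matrix_mul_assoc)
  also have "\<dots> = c * trace (matrix_inv N ** (transpose A ** A))"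
    using trace_mul_sym[of A "matrix_inv N ** transpose A"] by (simp add: matrix_mul_assoc)
  also have "\<dots> = trace (matrix_inv N ** (c *\<^sub>R (transpose A ** A)))"
    by (simp add: matrix_scalar_ac scalar_matrix_assoc[symmetric] trace_scaleR)
  also have "\<dots> = trace (matrix_inv N ** N) - trace (matrix_inv N)"
    unfolding N_def by (simp add: matrix_add_ldistrib trace_add)
  finally show ?thesis
    unfolding M_def N_def matrix_inv_left[OF inv_N[unfolded N_def]] trace_I by simp
qed

theorem lemma6:
  fixes A :: "real^'n^'m" and \<alpha> :: real
  assumes "\<alpha> > 0"
  shows "dpp_expect ((1/\<alpha>) *\<^sub>R (transpose A ** A)) (Er A)
           = trace (A ** transpose A ** matrix_inv (mat 1 + (1/\<alpha>) *\<^sub>R (A ** transpose A)))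
       \<and> trace (A ** transpose A ** matrix_inv (mat 1 + (1/\<alpha>) *\<^sub>R (A ** transpose A)))
           = dpp_expect ((1/\<alpha>) *\<^sub>R (transpose A ** A)) (\<lambda>S. real (card S)) * \<alpha>"
proof -
  define L where "L = (1/\<alpha>) *\<^sub>R (transpose A ** A)"
  define N where "N = mat 1 + L"
  define Z where "Z = (\<Sum>T\<in>Pow UNIV. real (card T) * principal_minor L T)"
  define r where "r = real CARD('n) - trace (matrix_inv N)"
  have inv_N: "invertible N"
    unfolding N_def L_def using invertible_mat1_add_gram[of "1/\<alpha>" A] assms by simp
  have "(1/\<alpha>) * (\<Sum>S\<in>Pow UNIV. principal_minor L S * Er A S) = Z"
    unfolding L_def Z_def by (rule sum_principal_minor_gram_mult_Er)
  then have "(\<Sum>S\<in>Pow UNIV. principal_minor L S * Er A S) = \<alpha> * Z"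
    using assms by (simp add: field_simps)
  then have "dpp_expect L (Er A) = \<alpha> * Z / det N"
    unfolding dpp_expect_def dpp_prob_def N_def[symmetric]
    by (simp add: sum_divide_distrib[symmetric])
  moreover have "dpp_expect L (\<lambda>S. real (card S)) = Z / det N"
    unfolding dpp_expect_def dpp_prob_def N_def[symmetric] Z_def
    by (simp add: sum_divide_distrib mult_ac)
  moreover have "Z = det N * r"
    unfolding Z_def r_def N_def by (rule sum_card_mult_principal_minor[OF inv_N[unfolded N_def]])
  moreover have "trace (A ** transpose A ** matrix_inv (mat 1 + (1/\<alpha>) *\<^sub>R (A ** transpose A))) = \<alpha> * r"
    using trace_gram_push_through[of "1/\<alpha>" A] assms by (simp add: r_def N_def L_def field_simps)
  moreover have "det N \<noteq> 0"
    using inv_N invertible_det_nz by blast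
  ultimately show ?thesis
    unfolding L_def by simp
qed

end
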